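(* Let $r\ge 1$, $m=2^r$, and let $n$ be a positive integer with $m\mid n$. Let $b$ be an odd positive integer having property $\mathcal{P}$ with respect to $n$. Then $x^n+b^m$ is irreducible over $\mathbb{Z}$.
   Context: For a positive integer $N$, a positive integer $b$ has property $\mathcal{P}$ with respect to $N$ if either $b$ is a prime number, or $b=(p_1^{b_1}p_2^{b_2}\cdots p_k^{b_k})^d$ where $k\ge 2$, $p_1,\dots,p_k$ are distinct primes, $b_1,\dots,b_k\ge 1$, $\gcd(b_1,\ldots,b_k)=1$, and $d$ is a positive integer with $\gcd(d,N)=1$. A monic polynomial in $\mathbb{Z}[x]$ of degree $\ge 1$ is irreducible over $\mathbb{Z}$ if it is not a product of two polynomials in $\mathbb{Z}[x]$ of degree at least $1$. *)

theory Defs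
  imports "HOL-Computational_Algebra.Computational_Algebra"
begin

definition hasP :: "nat \<Rightarrow> nat \<Rightarrow> bool" where
  "hasP N b \<longleftrightarrow> b > 0 \<and>
     (prime b \<or>
      (\<exists>c d. b = c ^ d \<and> d > 0 \<and> coprime d N \<and> c > 0 \<and>
         card (prime_factors c) \<ge> 2 \<and>
         Gcd ((\<lambda>p. multiplicity p c) ` prime_factors c) = 1))"

definition irreducible_over_Z :: "int poly \<Rightarrow> bool" where
  "irreducible_over_Z f \<longleftrightarrow> degree f \<ge> 1 \<and>
     \<not> (\<exists>g h. degree g \<ge> 1 \<and> degree h \<ge> 1 \<and> f = g * h)"

end

theory Submission
  imports Defs "HOL-Computational_Algebra.Field_as_Ring" "Jordan_Normal_Form.Char_Poly"
begin

(* Let g be a monic factor of positive degree d of f = x^n + b^m; it suffices to show n dvd d.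
   Write n = m K and n = 2^s t with t odd.

   Comparing constant terms gives |g(0)|^n = b^(m d), hence |g(0)|^K = b^d, and property P
   forces K dvd d; as t dvd K, also t dvd d.

   The t-th powers of the roots of g are the roots of a monic integer polynomial G of degree d,
   and each of them is a root of x^(2^s) + b^m. Since b^m = 1 mod 4, Eisenstein at 2 after
   x -> x + 1 shows that x^(2^s) + b^m is irreducible, so G divides a power of it and 2^s dvd d. *)

no_notation fps_nth (infixl \<open>$\<close> 75)

lemma power_eq_power_imp_dvd_exponent:
  fixes a c K D :: nat
  assumes a: "Gcd ((\<lambda>p. multiplicity p a) ` prime_factors a) = 1"
    and eq: "c ^ K = a ^ D"
  shows "K dvd D"
proof (cases "K = 0")
  case True
  have "a > 1" using a by (cases "a \<le> 1") (auto simp: le_Suc_eq)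
  moreover have "a ^ D = 1" using eq True by simp
  ultimately show ?thesis using True by simp
next
  case False
  have "a \<noteq> 0" using a by (cases "a = 0") auto
  then have "c \<noteq> 0" using eq False by (metis power_not_zero zero_power neq0_conv)
  have "K dvd D * multiplicity p a" if "p \<in> prime_factors a" for p
  proof -
    have "prime p" using that by auto
    then have "K * multiplicity p c = D * multiplicity p a"
      using eq \<open>c \<noteq> 0\<close> \<open>a \<noteq> 0\<close>
      by (metis prime_elem_multiplicity_power_distrib prime_imp_prime_elem)
    then show ?thesis by (metis dvd_triv_left)
  qed
  then have "K dvd Gcd ((*) D ` (\<lambda>p. multiplicity p a) ` prime_factors a)"
    by (auto intro!: Gcd_greatest)
  then show ?thesis by (simp only: Gcd_mult a) simp
qed

lemma hasP_power_eq_imp_dvd: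
  fixes N b c K d :: nat
  assumes "hasP N b" and eq: "c ^ K = b ^ d" and "K dvd N"
  shows "K dvd d"
proof -
  from assms(1) consider (prime) "prime b"
    | (power) a e where "b = a ^ e" "coprime e N"
        "Gcd ((\<lambda>p. multiplicity p a) ` prime_factors a) = 1"
    unfolding hasP_def by blast
  then show ?thesis
  proof cases
    case prime
    then have "Gcd ((\<lambda>p. multiplicity p b) ` prime_factors b) = 1"
      by (simp add: prime_prime_factors)
    then show ?thesis using power_eq_power_imp_dvd_exponent eq by blast
  next
    case power
    have "K dvd e * d"
      using power_eq_power_imp_dvd_exponent[OF power(3)] eq power(1) by (simp add: power_mult)
    moreover have "coprime K e"
      using power(2) \<open>K dvd N\<close> by (metis coprime_commute coprime_mult_right_iff dvd_def)
    ultimately show ?thesis by (simp add: coprime_dvd_mult_right_iff)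
  qed
qed

lemma even_binomial_two_power:
  assumes "0 < i" "i < 2 ^ s"
  shows "even ((2 ^ s) choose i :: nat)"
proof (rule ccontr)
  assume odd: "odd ((2 ^ s) choose i)"
  obtain j where j: "i = Suc j" using assms by (cases i) auto
  have "i * ((2 ^ s) choose i) = 2 ^ s * ((2 ^ s - 1) choose j)"
    unfolding j by (rule binomial_absorption)
  then have "(2::nat) ^ s dvd i * ((2 ^ s) choose i)" by simp
  moreover have "coprime ((2::nat) ^ s) ((2 ^ s) choose i)"
    using odd by (simp add: coprime_commute)
  ultimately have "(2::nat) ^ s dvd i" by (simp add: coprime_dvd_mult_left_iff)
  then show False using assms by (simp add: nat_dvd_not_less)
qed

lemma prime_not_dvd_coeff_mult:
  fixes a b :: "int poly" and p :: int
  assumes "prime p" and b0: "\<not> p dvd coeff b 0" and ai: "\<not> p dvd coeff a i"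
    and below: "\<And>j. j < i \<Longrightarrow> p dvd coeff a j"
  shows "\<not> p dvd coeff (a * b) i"
proof
  assume "p dvd coeff (a * b) i"
  moreover have "coeff (a * b) i = (\<Sum>j<i. coeff a j * coeff b (i - j)) + coeff a i * coeff b 0"
    by (simp add: coeff_mult lessThan_Suc_atMost[symmetric])
  moreover have "p dvd (\<Sum>j<i. coeff a j * coeff b (i - j))"
    using below by (auto intro!: dvd_sum)
  ultimately have "p dvd coeff a i * coeff b 0" by (simp add: dvd_add_right_iff)
  then show False using \<open>prime p\<close> ai b0 by (simp add: prime_dvd_mult_iff)
qed

lemma eisenstein_monic:
  fixes P a b :: "int poly" and p :: int
  assumes "prime p" and monic: "lead_coeff P = 1"
    and dvd_coeff: "\<And>i. i < degree P \<Longrightarrow> p dvd coeff P i"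
    and not_dvd: "\<not> p ^ 2 dvd coeff P 0"
    and P: "P = a * b"
  shows "degree a = 0 \<or> degree b = 0"
proof -
  have no_split: False if ab: "P = a * b" and "degree a > 0" "degree b > 0"
    and a0: "p dvd coeff a 0" and b0: "\<not> p dvd coeff b 0" for a b
  proof -
    have "lead_coeff a * lead_coeff b = 1" using ab monic by (simp add: lead_coeff_mult)
    then have lc: "\<not> p dvd lead_coeff a"
      using \<open>prime p\<close> by (metis dvd_mult2 not_prime_unit)
    define i where "i = (LEAST i. \<not> p dvd coeff a i)"
    have ai: "\<not> p dvd coeff a i" unfolding i_def using lc by (rule LeastI)
    have "i \<le> degree a" unfolding i_def using lc by (rule Least_le)
    moreover have "degree P = degree a + degree b"
      using ab \<open>degree a > 0\<close> \<open>degree b > 0\<close> by (metis degree_0 degree_mult_eq not_less_zero)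
    ultimately have "p dvd coeff P i" using \<open>degree b > 0\<close> by (intro dvd_coeff) simp
    moreover have "\<not> p dvd coeff (a * b) i"
      using \<open>prime p\<close> b0 ai by (rule prime_not_dvd_coeff_mult) (use not_less_Least i_def in blast)
    ultimately show False using ab by simp
  qed
  show ?thesis
  proof (rule ccontr)
    assume "\<not> ?thesis"
    then have "degree a > 0" "degree b > 0" by auto
    then have "degree P > 0" using P by (metis add_gr_0 degree_0 degree_mult_eq not_less_zero)
    then have "p dvd coeff a 0 * coeff b 0" using dvd_coeff[of 0] P by (simp add: coeff_mult)
    moreover have "\<not> (p dvd coeff a 0 \<and> p dvd coeff b 0)"
      using not_dvd P by (auto simp: coeff_mult power2_eq_square mult_dvd_mono)
    ultimately consider "p dvd coeff a 0" "\<not> p dvd coeff b 0" | "p dvd coeff b 0" "\<not> p dvd coeff a 0"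
      using \<open>prime p\<close> by (auto simp: prime_dvd_mult_iff)
    then show False
      using no_split[of a b] no_split[of b a] P \<open>degree a > 0\<close> \<open>degree b > 0\<close>
      by cases (auto simp: mult.commute)
  qed
qed

lemma monom_one_pcompose: "monom 1 n \<circ>\<^sub>p q = q ^ n"
  by (induct n) (simp_all add: monom_Suc monom_0)

text \<open>After the substitution \<open>x \<mapsto> x + 1\<close> the middle coefficients are binomial coefficients
  of a power of two, hence even, and the constant term \<open>1 + B\<close> is \<open>2\<close> modulo \<open>4\<close>: Eisenstein at \<open>2\<close>.\<close>

lemma prime_two_power_binomial:
  fixes B :: int
  assumes B: "B mod 4 = 1"
  shows "prime (monom 1 (2 ^ s) + [:B:] :: int poly)"
proof -
  define M :: nat where "M = 2 ^ s"
  define F :: "int poly" where "F = monom 1 M + [:B:]"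
  have "M > 0" by (simp add: M_def)
  then have dF: "degree F = M" by (simp add: F_def degree_add_eq_left degree_monom_eq)
  then have monic: "lead_coeff F = 1" using \<open>M > 0\<close> by (simp add: F_def coeff_pCons split: nat.split)
  define P where "P = F \<circ>\<^sub>p [:1, 1:]"
  have dP: "degree P = M" using dF by (simp add: P_def)
  have cP: "coeff P i = int (M choose i) + (if i = 0 then B else 0)" if "i \<le> M" for i
    using that by (cases i) (simp_all add: P_def F_def pcompose_add monom_one_pcompose coeff_linear_poly_power)
  have "irreducible F"
  proof (rule irreducibleI)
    show "F \<noteq> 0" "\<not> is_unit F" using dF \<open>M > 0\<close> by (auto simp: is_unit_poly_iff)
    fix a b assume ab: "F = a * b"
    have "even (1 + B)" "\<not> 4 dvd 1 + B" using B by presburger+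
    have Pab: "P = (a \<circ>\<^sub>p [:1, 1:]) * (b \<circ>\<^sub>p [:1, 1:])" using ab by (simp add: P_def pcompose_mult)
    have "degree (a \<circ>\<^sub>p [:1, 1:]) = 0 \<or> degree (b \<circ>\<^sub>p [:1, 1:]) = 0"
    proof (rule eisenstein_monic[OF _ _ _ _ Pab])
      show "lead_coeff P = 1" using dP cP[of M] \<open>M > 0\<close> by simp
      show "2 dvd coeff P i" if "i < degree P" for i
        using that dP cP[of i] even_binomial_two_power[of i s] \<open>even (1 + B)\<close>
        by (cases "i = 0") (auto simp: M_def)
      show "\<not> 2 ^ 2 dvd coeff P 0" using cP[of 0] \<open>\<not> 4 dvd 1 + B\<close> by simp
    qed simp
    then have "degree a = 0 \<or> degree b = 0" by simp
    moreover have "lead_coeff a * lead_coeff b = 1" using ab monic by (simp add: lead_coeff_mult)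
    ultimately show "is_unit a \<or> is_unit b"
      by (metis degree_eq_zeroE dvd_triv_left dvd_triv_right is_unit_const_poly_iff lead_coeff_pCons(2))
  qed
  then show ?thesis
    using monic by (simp add: F_def M_def prime_def irreducible_imp_prime_elem normalize_monic)
qed

lemma degree_dvd_of_dvd_prime_power:
  fixes F G :: "int poly"
  assumes "prime F" and "G dvd F ^ N"
  shows "degree F dvd degree G"
proof -
  obtain m where m: "normalize G = normalize (F ^ m)"
    using divides_primepow_weak[OF assms] by blast
  have "F \<noteq> 0" "G \<noteq> 0" using assms by auto
  have "G dvd F ^ m" "F ^ m dvd G" using m by (metis normalize_dvd_iff dvd_refl)+
  then have "degree G = degree (F ^ m)"
    using \<open>F \<noteq> 0\<close> \<open>G \<noteq> 0\<close> by (intro antisym dvd_imp_degree_le) auto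
  also have "\<dots> = m * degree F" using \<open>F \<noteq> 0\<close> by (simp add: degree_power_eq)
  finally show ?thesis by simp
qed

lemma monic_dvd_minus_pseudo_mod:
  fixes f g :: "'a :: {comm_ring_1, semiring_1_no_zero_divisors} poly"
  assumes "lead_coeff g = 1"
  shows "g dvd f - pseudo_mod f g"
proof -
  have "g \<noteq> 0" using assms by auto
  obtain q r where qr: "pseudo_divmod f g = (q, r)" by fastforce
  from pseudo_divmod(1)[OF \<open>g \<noteq> 0\<close> qr] assms have "f = g * q + r" by simp
  moreover have "pseudo_mod f g = r" using qr by (simp add: pseudo_mod_def)
  ultimately show ?thesis by simp
qed

lemma monic_dvd_of_map_poly_of_int_dvd:
  fixes g f :: "int poly"
  assumes monic: "lead_coeff g = 1"
    and dvd: "map_poly (of_int :: int \<Rightarrow> 'a :: field_char_0) g dvd map_poly of_int f"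
  shows "g dvd f"
proof -
  let ?h = "map_poly (of_int :: int \<Rightarrow> 'a)" and ?r = "pseudo_mod f g"
  have "g \<noteq> 0" using monic by auto
  have "?h g dvd ?h (f - ?r)" by (rule of_int_poly_hom.hom_dvd[OF monic_dvd_minus_pseudo_mod[OF monic]])
  then have "?h g dvd ?h ?r" using dvd by (simp add: of_int_poly_hom.hom_minus dvd_diff_right_iff)
  have "?r = 0"
  proof (rule ccontr)
    assume "?r \<noteq> 0"
    then have "degree g \<le> degree ?r" using dvd_imp_degree_le[OF \<open>?h g dvd ?h ?r\<close>] by simp
    then show False using pseudo_mod(2)[OF \<open>g \<noteq> 0\<close>, of f] \<open>?r \<noteq> 0\<close> by simp
  qed
  then show ?thesis using monic_dvd_minus_pseudo_mod[OF monic, of f] by simp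
qed

definition poly_of_vec :: "'a :: comm_semiring_1 vec \<Rightarrow> 'a poly" where
  "poly_of_vec v = (\<Sum>j<dim_vec v. monom (v $ j) j)"

lemma coeff_poly_of_vec: "coeff (poly_of_vec v) i = (if i < dim_vec v then v $ i else 0)"
  by (simp add: poly_of_vec_def coeff_sum)

lemma poly_of_vec_eq_0_iff: "poly_of_vec v = 0 \<longleftrightarrow> v = 0\<^sub>v (dim_vec v)"
  by (auto simp: poly_eq_iff coeff_poly_of_vec vec_eq_iff)

lemma degree_poly_of_vec_less:
  assumes "dim_vec v > 0"
  shows "degree (poly_of_vec v) < dim_vec v"
proof -
  have "degree (poly_of_vec v) \<le> dim_vec v - 1" by (rule degree_le) (auto simp: coeff_poly_of_vec)
  then show ?thesis using assms by linarith
qed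

text \<open>For monic \<open>g\<close> of degree \<open>d\<close>, the matrix of multiplication by \<open>q\<close> on \<open>\<int>[x]/(g)\<close> in the
  basis \<open>1, x, \<dots>, x^(d - 1)\<close>; here \<open>pseudo_mod\<close> is the ordinary remainder.\<close>

definition mult_mod_mat :: "int poly \<Rightarrow> int poly \<Rightarrow> int mat" where
  "mult_mod_mat g q =
     mat (degree g) (degree g) (\<lambda>(i, j). coeff (pseudo_mod (q * monom 1 j) g) i)"

lemma mult_mod_mat_mult_vec:
  fixes g q :: "int poly" and v :: "'a :: field_char_0 vec"
  assumes monic: "lead_coeff g = 1" and v: "v \<in> carrier_vec (degree g)"
  shows "map_poly of_int g dvd
    map_poly of_int q * poly_of_vec v - poly_of_vec (map_mat of_int (mult_mod_mat g q) *\<^sub>v v)"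
proof -
  let ?h = "map_poly (of_int :: int \<Rightarrow> 'a)" and ?d = "degree g"
  define R where "R j = pseudo_mod (q * monom 1 j) g" for j
  have "g \<noteq> 0" using monic by auto
  then have R_coeff: "coeff (R j) i = 0" if "?d \<le> i" for i j
    using pseudo_mod(2)[OF \<open>g \<noteq> 0\<close>, of "q * monom 1 j"] that by (auto simp: R_def intro: coeff_eq_0)
  have "poly_of_vec (map_mat of_int (mult_mod_mat g q) *\<^sub>v v) = (\<Sum>j<?d. Polynomial.smult (v $ j) (?h (R j)))"
  proof (rule poly_eqI)
    fix i
    show "coeff (poly_of_vec (map_mat of_int (mult_mod_mat g q) *\<^sub>v v)) i =
        coeff (\<Sum>j<?d. Polynomial.smult (v $ j) (?h (R j))) i"
      using v R_coeff
      by (auto simp: coeff_poly_of_vec coeff_sum mult_mod_mat_def R_def mult_mat_vec_def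
          scalar_prod_def atLeast0LessThan mult.commute)
  qed
  moreover have "?h q * poly_of_vec v = (\<Sum>j<?d. Polynomial.smult (v $ j) (?h (q * monom 1 j)))"
    using v by (simp add: poly_of_vec_def sum_distrib_left of_int_poly_hom.hom_mult smult_monom
        flip: mult_smult_right)
  moreover have "?h g dvd (\<Sum>j<?d. Polynomial.smult (v $ j) (?h (q * monom 1 j) - ?h (R j)))"
    using monic_dvd_minus_pseudo_mod[OF monic] unfolding R_def
    by (intro dvd_sum dvd_smult) (simp flip: of_int_poly_hom.hom_minus)
  ultimately show ?thesis by (simp only: smult_diff_right sum_subtractf)
qed

lemma common_root_of_dvd_mult:
  fixes g h p :: "complex poly"
  assumes "g dvd h * p" and "p \<noteq> 0" and "degree p < degree g"
  obtains z where "poly g z = 0" and "poly h z = 0"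
proof -
  define D where "D = gcd g h"
  have "\<not> coprime g h"
  proof
    assume "coprime g h"
    then have "g dvd p" by (metis assms(1) coprime_dvd_mult_right_iff)
    from dvd_imp_degree_le[OF this assms(2)] show False using assms(3) by simp
  qed
  moreover have "D \<noteq> 0" using assms(3) by (auto simp: D_def)
  ultimately have "degree D \<noteq> 0" unfolding D_def by (metis is_unit_gcd is_unit_iff_degree)
  then have "\<not> constant (poly D)" by (simp add: constant_degree)
  then obtain z where "poly D z = 0" using fundamental_theorem_of_algebra by blast
  then have "[:-z, 1:] dvd D" by (simp add: poly_eq_0_iff_dvd)
  moreover have "D dvd g" "D dvd h" by (simp_all add: D_def)
  ultimately have "[:-z, 1:] dvd g" "[:-z, 1:] dvd h" by (meson dvd_trans)+
  then show thesis using that by (simp add: poly_eq_0_iff_dvd)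
qed

lemma root_char_poly_mult_mod_mat:
  fixes g q :: "int poly" and l :: complex
  assumes monic: "lead_coeff g = 1"
    and root: "poly (map_poly of_int (char_poly (mult_mod_mat g q))) l = 0"
  obtains a where "poly (map_poly of_int g) a = 0" and "poly (map_poly of_int q) a = l"
proof -
  let ?h = "map_poly (of_int :: int \<Rightarrow> complex)" and ?d = "degree g"
  let ?A = "map_mat (of_int :: int \<Rightarrow> complex) (mult_mod_mat g q)"
  have "mult_mod_mat g q \<in> carrier_mat ?d ?d" by (simp add: mult_mod_mat_def)
  then have A: "?A \<in> carrier_mat ?d ?d"
    and "char_poly ?A = map_poly of_int (char_poly (mult_mod_mat g q))"
    by (simp_all add: of_int_hom.char_poly_hom)
  then have "eigenvalue ?A l" using root eigenvalue_root_char_poly[OF A] by simp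
  then obtain v where v: "v \<in> carrier_vec ?d" "v \<noteq> 0\<^sub>v ?d" "?A *\<^sub>v v = l \<cdot>\<^sub>v v"
    unfolding eigenvalue_def eigenvector_def using A by auto
  have "poly_of_vec (l \<cdot>\<^sub>v v) = Polynomial.smult l (poly_of_vec v)"
    by (rule poly_eqI) (simp add: coeff_poly_of_vec)
  then have "?h g dvd (?h q - [:l:]) * poly_of_vec v"
    using mult_mod_mat_mult_vec[OF monic v(1), of q] v(3) by (simp add: algebra_simps)
  moreover have "poly_of_vec v \<noteq> 0" "degree (poly_of_vec v) < degree (?h g)"
    using v(1,2) degree_poly_of_vec_less[of v] by (auto simp: poly_of_vec_eq_0_iff)
  ultimately obtain a where "poly (?h g) a = 0" "poly (?h q - [:l:]) a = 0"
    by (rule common_root_of_dvd_mult)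
  then show thesis by (intro that) auto
qed

lemma poly_map_poly_of_int_binomial:
  "poly (map_poly of_int (monom 1 n + [:B:])) x = x ^ n + (of_int B :: 'a :: comm_ring_1)"
  by (simp add: of_int_poly_hom.hom_add poly_monom of_int_hom.map_poly_pCons_hom)

lemma abs_coeff_0_power_of_dvd_binomial:
  fixes g :: "int poly" and B :: int
  assumes monic: "lead_coeff g = 1" and dvd: "g dvd monom 1 n + [:B:]"
  shows "\<bar>coeff g 0\<bar> ^ n = \<bar>B\<bar> ^ degree g"
proof -
  let ?h = "map_poly (of_int :: int \<Rightarrow> complex)"
  obtain as where "Polynomial.smult (lead_coeff (?h g)) (\<Prod>a\<leftarrow>as. [:- a, 1:]) = ?h g"
    and len: "length as = degree (?h g)"
    using fundamental_theorem_algebra_factorized by blast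
  then have g: "?h g = (\<Prod>a\<leftarrow>as. [:- a, 1:])" using monic by simp
  obtain k where k: "monom 1 n + [:B:] = g * k" using dvd by (elim dvdE)
  have roots: "\<forall>a \<in> set as. norm a ^ n = real_of_int \<bar>B\<bar>"
  proof
    fix a assume "a \<in> set as"
    then have "poly (?h g) a = 0" by (simp add: g poly_prod_list)
    then have "poly (?h (monom 1 n + [:B:])) a = 0"
      unfolding k of_int_poly_hom.hom_mult poly_mult by simp
    then have "a ^ n = - of_int B"
      unfolding poly_map_poly_of_int_binomial by (simp add: eq_neg_iff_add_eq_0)
    then have "norm (a ^ n) = norm (of_int B :: complex)" by simp
    then show "norm a ^ n = real_of_int \<bar>B\<bar>" by (simp add: norm_power)
  qed
  have norm_prod: "norm (\<Prod>a\<leftarrow>xs. - a) ^ n = real_of_int \<bar>B\<bar> ^ length xs"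
    if "\<forall>a \<in> set xs. norm a ^ n = real_of_int \<bar>B\<bar>" for xs :: "complex list"
    using that by (induct xs) (simp_all add: norm_mult power_mult_distrib)
  have "of_int (coeff g 0) = poly (?h g) 0" by (simp add: poly_0_coeff_0)
  also have "\<dots> = (\<Prod>a\<leftarrow>as. - a)" by (simp add: g poly_prod_list o_def)
  finally have c0: "of_int (coeff g 0) = (\<Prod>a\<leftarrow>as. - a)" .
  have "real_of_int \<bar>coeff g 0\<bar> ^ n = norm (\<Prod>a\<leftarrow>as. - a) ^ n"
    unfolding c0[symmetric] by simp
  also have "\<dots> = real_of_int \<bar>B\<bar> ^ degree g" using norm_prod[OF roots] len by simp
  finally show ?thesis by (simp only: of_int_eq_iff flip: of_int_power)
qed

lemma hasP_dvd_degree_of_monic_dvd: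
  fixes m K b :: nat and g :: "int poly"
  assumes "hasP (m * K) b" and "m > 0" and monic: "lead_coeff g = 1"
    and dvd: "g dvd monom 1 (m * K) + [:int b ^ m:]"
  shows "K dvd degree g"
proof -
  define c where "c = nat \<bar>coeff g 0\<bar>"
  have "int (c ^ (m * K)) = int ((b ^ m) ^ degree g)"
    using abs_coeff_0_power_of_dvd_binomial[OF monic dvd] by (simp add: c_def)
  then have "(c ^ K) ^ m = (b ^ degree g) ^ m"
    by (simp only: of_nat_eq_iff flip: power_mult) (simp add: mult.commute)
  then have "c ^ K = b ^ degree g" using \<open>m > 0\<close> by (simp add: power_eq_iff_eq_base)
  then show ?thesis by (rule hasP_power_eq_imp_dvd[OF assms(1)]) simp
qed

lemma two_power_dvd_degree_of_monic_dvd: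
  fixes g :: "int poly" and B :: int
  assumes B: "B mod 4 = 1" and monic: "lead_coeff g = 1"
    and dvd: "g dvd monom 1 (2 ^ s * t) + [:B:]"
  shows "2 ^ s dvd degree g"
proof -
  let ?h = "map_poly (of_int :: int \<Rightarrow> complex)"
  define F :: "int poly" where "F = monom 1 (2 ^ s) + [:B:]"
  \<comment> \<open>its roots are the \<open>t\<close>-th powers of the roots of \<open>g\<close>\<close>
  define G where "G = char_poly (mult_mod_mat g (monom 1 t))"
  have G: "lead_coeff G = 1" "degree G = degree g"
    using degree_monic_char_poly[of "mult_mod_mat g (monom 1 t)" "degree g"]
    by (auto simp: G_def mult_mod_mat_def)
  have "poly (?h F) l = 0" if root: "poly (?h G) l = 0" for l
  proof -
    obtain a where a: "poly (?h g) a = 0" "poly (?h (monom 1 t)) a = l"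
      using root_char_poly_mult_mod_mat[OF monic root[unfolded G_def]] .
    obtain k where k: "monom 1 (2 ^ s * t) + [:B:] = g * k" using dvd by (elim dvdE)
    have "poly (?h (monom 1 (2 ^ s * t) + [:B:])) a = 0"
      unfolding k of_int_poly_hom.hom_mult poly_mult using a(1) by simp
    moreover have "l = a ^ t" using a(2) by (simp add: poly_monom)
    ultimately show ?thesis
      unfolding F_def poly_map_poly_of_int_binomial by (simp add: power_mult mult.commute)
  qed
  then have "\<forall>l. poly (?h G) l = 0 \<longrightarrow> poly (?h F) l = 0" by blast
  then have "?h G dvd ?h F ^ degree (?h G) \<or> ?h G = 0 \<and> ?h F = 0"
    by (simp only: nullstellensatz_univariate)
  then have "?h G dvd ?h F ^ degree (?h G)" using G(1) by auto
  then have "G dvd F ^ degree g"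
    by (intro monic_dvd_of_map_poly_of_int_dvd[OF G(1)]) (simp add: G(2) of_int_poly_hom.hom_power)
  then have "degree F dvd degree G"
    using prime_two_power_binomial[OF B] by (intro degree_dvd_of_dvd_prime_power) (simp_all add: F_def)
  then show ?thesis by (simp add: G F_def degree_add_eq_left degree_monom_eq)
qed

lemma odd_square_mod_4:
  fixes x :: int
  assumes "odd x"
  shows "x ^ 2 mod 4 = 1"
proof -
  obtain k where "x = 2 * k + 1" using assms by (auto elim: oddE)
  then have "x ^ 2 = 4 * (k * k + k) + 1" by (simp add: power2_eq_square algebra_simps)
  then show ?thesis by presburger
qed

lemma dvd_degree_of_monic_dvd:
  fixes r n b :: nat and g :: "int poly"
  assumes "r \<ge> 1" and "n > 0" and "2 ^ r dvd n" and "odd b" and "hasP n b"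
    and monic: "lead_coeff g = 1" and dvd: "g dvd monom 1 n + [:int b ^ 2 ^ r:]"
  shows "n dvd degree g"
proof -
  obtain K where K: "n = 2 ^ r * K" using assms(3) by blast
  obtain t where t: "n = 2 ^ multiplicity 2 n * t" "\<not> 2 dvd t"
    using multiplicity_decompose'[of n 2] \<open>n > 0\<close> by auto
  have "K dvd degree g"
    using hasP_dvd_degree_of_monic_dvd[of "2 ^ r" K b g] assms K by simp
  moreover have "t dvd K"
  proof -
    have "t dvd 2 ^ r * K" using K t(1) by (metis dvd_triv_right)
    moreover have "coprime t (2 ^ r)" using t(2) by simp
    ultimately show ?thesis by (simp add: coprime_dvd_mult_right_iff)
  qed
  ultimately have "t dvd degree g" by (rule dvd_trans[rotated])
  have "int b ^ 2 ^ r = (int b ^ 2 ^ (r - 1)) ^ 2"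
    using \<open>r \<ge> 1\<close> by (simp flip: power_mult power_Suc2)
  then have "int b ^ 2 ^ r mod 4 = 1" using \<open>odd b\<close> by (simp add: odd_square_mod_4)
  then have "2 ^ multiplicity 2 n dvd degree g"
    using dvd t(1) by (intro two_power_dvd_degree_of_monic_dvd[OF _ monic, where t = t]) simp_all
  moreover have "coprime (2 ^ multiplicity 2 n) t" using t(2) by simp
  ultimately show ?thesis using \<open>t dvd degree g\<close> t(1) by (metis divides_mult)
qed

lemma irreducible_over_Z_if_monic_factors_large:
  fixes f :: "int poly"
  assumes monic: "lead_coeff f = 1" and "degree f \<ge> 1"
    and large: "\<And>g. lead_coeff g = 1 \<Longrightarrow> degree g \<ge> 1 \<Longrightarrow> g dvd f \<Longrightarrow> degree f \<le> degree g"
  shows "irreducible_over_Z f"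
proof -
  have no_split: False if "degree g \<ge> 1" "degree h \<ge> 1" and f: "f = g * h" for g h
  proof -
    have "g \<noteq> 0" "h \<noteq> 0" using that by auto
    define u where "u = lead_coeff g"
    have "u * lead_coeff h = 1" using f monic by (simp add: u_def lead_coeff_mult)
    then have "u * u = 1" by (metis zmult_eq_1_iff)
    then have "u \<noteq> 0" by (metis mult_zero_left zero_neq_one)
    have "Polynomial.smult u g * Polynomial.smult u h = Polynomial.smult (u * u) (g * h)"
      by (simp only: mult_smult_left mult_smult_right smult_smult)
    then have "Polynomial.smult u g dvd f" using f \<open>u * u = 1\<close> by (metis dvd_triv_left smult_1_left)
    moreover have "lead_coeff (Polynomial.smult u g) = u * u" by (simp add: u_def)
    ultimately have "degree f \<le> degree (Polynomial.smult u g)"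
      using that(1) \<open>u \<noteq> 0\<close> \<open>u * u = 1\<close> by (intro large) simp_all
    then have "degree f \<le> degree g" using \<open>u \<noteq> 0\<close> by simp
    moreover have "degree f = degree g + degree h"
      using f \<open>g \<noteq> 0\<close> \<open>h \<noteq> 0\<close> by (simp add: degree_mult_eq)
    ultimately show False using \<open>degree h \<ge> 1\<close> by simp
  qed
  show ?thesis
    unfolding irreducible_over_Z_def
  proof (intro conjI notI)
    show "degree f \<ge> 1" by fact
    assume "\<exists>g h. degree g \<ge> 1 \<and> degree h \<ge> 1 \<and> f = g * h"
    then show False by (elim exE conjE) (rule no_split)
  qed
qed

theorem lemma5:
  fixes r n b :: nat
  assumes "r \<ge> 1" and "n > 0" and "2 ^ r dvd n"
    and "odd b" and "hasP n b"
  shows "irreducible_over_Z (monom 1 n + [: (int b) ^ (2 ^ r) :])"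
proof -
  define f :: "int poly" where "f = monom 1 n + [:int b ^ 2 ^ r:]"
  have "degree f = n" using \<open>n > 0\<close> by (simp add: f_def degree_add_eq_left degree_monom_eq)
  moreover have "lead_coeff f = 1"
    using \<open>n > 0\<close> \<open>degree f = n\<close> by (simp add: f_def coeff_pCons split: nat.split)
  moreover have "n dvd degree g" if "lead_coeff g = 1" "g dvd f" for g
    using dvd_degree_of_monic_dvd[OF assms that(1)] that(2) by (simp add: f_def)
  ultimately have "irreducible_over_Z f"
    using \<open>n > 0\<close> by (intro irreducible_over_Z_if_monic_factors_large) (auto intro: dvd_imp_le)
  then show ?thesis by (simp add: f_def)
qed

end
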